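(* Let $\mathbb{E}$ be a finite-dimensional Euclidean space, $\mathcal{K}\subseteq\mathbb{E}$ a closed convex cone, $\mathcal{A}:\mathbb{E}\to\mathbb{R}^m$ a surjective linear map and $b\in\mathbb{R}^m$, and let $\mathcal{F}=\{x\in\mathcal{K}:\mathcal{A}x=b\}\neq\emptyset$. Suppose that strict feasibility fails for $\mathcal{F}$, i.e. $\mathcal{F}\cap\operatorname{relint}(\mathcal{K})=\emptyset$. Then every point of $\mathcal{F}$ is degenerate.
   Context: $\mathcal{K}^*=\{z\in\mathbb{E}:\langle z,x\rangle\ge 0\ \forall x\in\mathcal{K}\}$ is the dual cone. For $\bar x\in\mathcal{K}$, $\operatorname{face}(\bar x,\mathcal{K})$ denotes the minimal face of $\mathcal{K}$ containing $\bar x$ (the intersection of all faces of $\mathcal{K}$ containing $\bar x$). For a face $f$ of $\mathcal{K}$, its conjugate face is $f^\Delta=\{z\in\mathcal{K}^*:\langle z,x\rangle=0\ \forall x\in f\}$. A point $\bar x\in\mathcal{F}$ is called nondegenerate if $\operatorname{span}\big(\operatorname{face}(\bar x,\mathcal{K})^\Delta\big)\cap\mathcal{R}(\mathcal{A}^* )=\{0\}$, where $\mathcal{R}(\mathcal{A}^* )$ is the range of the adjoint $\mathcal{A}^*$; otherwise $\bar x$ is degenerate. *)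

theory Defs
  imports "HOL-Analysis.Analysis"
begin

definition dual_cone :: "'a::real_inner set \<Rightarrow> 'a set" where
  "dual_cone K = {z. \<forall>x\<in>K. inner z x \<ge> 0}"

definition min_face :: "'a::real_vector \<Rightarrow> 'a set \<Rightarrow> 'a set" where
  "min_face x K = \<Inter>{f. f face_of K \<and> x \<in> f}"

definition conj_face :: "'a::real_inner set \<Rightarrow> 'a set \<Rightarrow> 'a set" where
  "conj_face K f = {z \<in> dual_cone K. \<forall>x\<in>f. inner z x = 0}"

definition feas_set :: "'a::real_vector set \<Rightarrow> ('a \<Rightarrow> 'b) \<Rightarrow> 'b \<Rightarrow> 'a set" where
  "feas_set K A b = {x \<in> K. A x = b}"

definition nondegenerate :: "'a::real_inner set \<Rightarrow> ('a \<Rightarrow> 'b::real_inner) \<Rightarrow> 'a \<Rightarrow> bool" where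
  "nondegenerate K A x \<longleftrightarrow> span (conj_face K (min_face x K)) \<inter> range (adjoint A) = {0}"

definition degenerate :: "'a::real_inner set \<Rightarrow> ('a \<Rightarrow> 'b::real_inner) \<Rightarrow> 'a \<Rightarrow> bool" where
  "degenerate K A x \<longleftrightarrow> \<not> nondegenerate K A x"

end

theory Submission
  imports Defs
begin

text \<open>Let \<open>M\<close> be the kernel of \<open>A\<close>. A feasible \<open>x\<close> cannot lie in
  \<open>rel_interior K + M = rel_interior (K + M)\<close>, since removing its kernel component would leave
  a strictly feasible point. So \<open>x\<close> is on the relative boundary of the convex set \<open>K + M\<close>, and a
  supporting hyperplane there gives \<open>a \<noteq> 0\<close> orthogonal to \<open>M\<close>, i.e. in the range of \<open>A\<^sup>*\<close>,
  minimised over \<open>K\<close> at \<open>x\<close>. As \<open>K\<close> is a cone, \<open>a \<in> K\<^sup>*\<close> and \<open>a \<bullet> x = 0\<close>, so the exposed face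
  \<open>K \<inter> a\<^sup>\<bottom>\<close> contains the minimal face of \<open>x\<close> and \<open>a\<close> lies in its conjugate face.\<close>

lemma range_adjoint_eq_orthogonal_comp_kernel:
  fixes f :: "'a::euclidean_space \<Rightarrow> 'b::euclidean_space"
  assumes "linear f"
  shows "range (adjoint f) = (f -` {0})\<^sup>\<bottom>"
proof -
  have "subspace (range (adjoint f))"
    using assms adjoint_linear linear_subspace_image subspace_UNIV by blast
  then show ?thesis
    using assms ker_orthogonal_comp_adjoint orthogonal_comp_self by metis
qed

lemma rel_interior_plus_subspace:
  fixes S M :: "'a::euclidean_space set"
  assumes "convex S" and "subspace M"
  shows "rel_interior (S + M) = rel_interior S + M"
  using assms
  by (simp add: rel_interior_sum subspace_imp_convex rel_interior_affine subspace_imp_affine)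

lemma supporting_functional_plus_subspace:
  fixes S M :: "'a::euclidean_space set"
  assumes "convex S" and "subspace M" and "x \<in> S" and "x \<notin> rel_interior S + M"
  obtains a where "a \<noteq> 0" and "a \<in> M\<^sup>\<bottom>" and "\<And>y. y \<in> S \<Longrightarrow> a \<bullet> x \<le> a \<bullet> y"
proof -
  have "0 \<in> M" using assms(2) subspace_0 by blast
  have plus_M: "y + m \<in> S + M" if "y \<in> S" "m \<in> M" for y m
    using that set_plus_intro by blast
  have "x \<in> S + M" using plus_M[OF \<open>x \<in> S\<close> \<open>0 \<in> M\<close>] by simp
  moreover have "x \<notin> rel_interior (S + M)"
    using assms by (simp add: rel_interior_plus_subspace)
  moreover have "convex (S + M)"
    using assms(1,2) convex_set_plus subspace_imp_convex by blast
  ultimately obtain a where "a \<noteq> 0" and supp: "\<And>y. y \<in> S + M \<Longrightarrow> a \<bullet> x \<le> a \<bullet> y"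
    using supporting_hyperplane_rel_boundary by blast
  have "a \<bullet> m = 0" if "m \<in> M" for m
  proof -
    have "- m \<in> M" using assms(2) that subspace_neg by blast
    then have "a \<bullet> x \<le> a \<bullet> (x + m)" and "a \<bullet> x \<le> a \<bullet> (x + - m)"
      using supp plus_M \<open>x \<in> S\<close> that by blast+
    then show ?thesis by (simp add: inner_add_right inner_diff_right)
  qed
  then have "a \<in> M\<^sup>\<bottom>"
    by (simp add: orthogonal_comp_def orthogonal_def inner_commute)
  moreover have "a \<bullet> x \<le> a \<bullet> y" if "y \<in> S" for y
    using supp plus_M[OF that \<open>0 \<in> M\<close>] by simp
  ultimately show ?thesis using \<open>a \<noteq> 0\<close> that by blast
qed

lemma conic_supporting_functional:
  assumes "conic K" and "x \<in> K" and supp: "\<And>y. y \<in> K \<Longrightarrow> a \<bullet> x \<le> a \<bullet> y"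
  shows "a \<bullet> x = 0" and "a \<in> dual_cone K"
proof -
  have "0 \<in> K" and "2 *\<^sub>R x \<in> K"
    using assms(1,2) conic_contains_0 conic_mul[of K x 2] by auto
  then have "a \<bullet> x \<le> 0" and "a \<bullet> x \<le> 2 * (a \<bullet> x)"
    using supp by fastforce+
  then show "a \<bullet> x = 0"
    by linarith
  with supp show "a \<in> dual_cone K"
    by (simp add: dual_cone_def)
qed

lemma dual_cone_orthogonal_in_conj_face_min_face:
  assumes "convex K" and "a \<in> dual_cone K" and "x \<in> K" and "a \<bullet> x = 0"
  shows "a \<in> conj_face K (min_face x K)"
proof -
  have "(K \<inter> {y. (- a) \<bullet> y = 0}) face_of K"
    using assms(1,2) by (intro face_of_Int_supporting_hyperplane_le) (auto simp: dual_cone_def)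
  then have "min_face x K \<subseteq> {y. a \<bullet> y = 0}"
    using assms(3,4) unfolding min_face_def by auto
  then show ?thesis
    using assms(2) unfolding conj_face_def by auto
qed

lemma not_strictly_feasible_not_in_rel_interior_plus_kernel:
  assumes "linear A" and "x \<in> feas_set K A b" and "feas_set K A b \<inter> rel_interior K = {}"
  shows "x \<notin> rel_interior K + A -` {0}"
proof
  assume "x \<in> rel_interior K + A -` {0}"
  then obtain k m where k: "k \<in> rel_interior K" and "A m = 0" and "x = k + m"
    by (auto elim: set_plus_elim)
  then have "A k = b"
    using assms(1,2) by (simp add: feas_set_def linear_add)
  then have "k \<in> feas_set K A b"
    using k rel_interior_subset by (auto simp: feas_set_def)
  with k assms(3) show False by blast
qed

theorem theorem3p1:
  fixes K :: "'a::euclidean_space set"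
    and A :: "'a \<Rightarrow> real ^ 'm"
    and b :: "real ^ 'm"
  assumes "closed K" and "convex_cone K"
    and "linear A" and "surj A"
    and "feas_set K A b \<noteq> {}"
    and "feas_set K A b \<inter> rel_interior K = {}"
  shows "\<forall>x \<in> feas_set K A b. degenerate K A x"
proof
  fix x assume xF: "x \<in> feas_set K A b"
  then have "x \<in> K" by (simp add: feas_set_def)
  have "convex K" and "conic K" using assms(2) by (auto simp: convex_cone_def)
  have "subspace (A -` {0})"
    using linear_subspace_kernel[OF assms(3)] by (simp add: vimage_def)
  then obtain a where "a \<noteq> 0" and "a \<in> (A -` {0})\<^sup>\<bottom>"
    and supp: "\<And>y. y \<in> K \<Longrightarrow> a \<bullet> x \<le> a \<bullet> y"
    using supporting_functional_plus_subspace \<open>convex K\<close> \<open>x \<in> K\<close>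
      not_strictly_feasible_not_in_rel_interior_plus_kernel[OF assms(3) xF assms(6)] by blast
  then have "a \<in> range (adjoint A)"
    using range_adjoint_eq_orthogonal_comp_kernel[OF assms(3)] by simp
  moreover have "a \<in> span (conj_face K (min_face x K))"
    using conic_supporting_functional[OF \<open>conic K\<close> \<open>x \<in> K\<close> supp]
      dual_cone_orthogonal_in_conj_face_min_face[OF \<open>convex K\<close> _ \<open>x \<in> K\<close>] span_base by blast
  ultimately show "degenerate K A x"
    using \<open>a \<noteq> 0\<close> unfolding degenerate_def nondegenerate_def by blast
qed

end
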